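(* Let $d = 10$. (i) If $n = (4(12m+9)+2) + 4(6k+3)\sqrt{10}$ with $m, k \in \mathbb{Z}$ and $m \equiv 1$ or $2 \pmod 5$, then there exist infinitely many $D(n)$-quadruples in $\mathbb{Z}[\sqrt{10}]$. (ii) If $n = (48m+2) + 24k\sqrt{10}$ with $m, k \in \mathbb{Z}$ and $m \equiv 3$ or $4 \pmod 5$, then there exist infinitely many $D(n)$-quadruples in $\mathbb{Z}[\sqrt{10}]$.
   Context: For $n \in \mathbb{Z}[\sqrt{d}]$, a set $\{a_1,a_2,a_3,a_4\}$ of four distinct non-zero elements of $\mathbb{Z}[\sqrt{d}]$ is called a $D(n)$-quadruple in $\mathbb{Z}[\sqrt{d}]$ if $a_ia_j + n$ is a square of an element of $\mathbb{Z}[\sqrt{d}]$ for all $1 \le i < j \le 4$. *)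

theory Defs
  imports Main
begin

text \<open>Elements of Z[sqrt d] are represented as pairs (a, b) of integers,
standing for a + b sqrt d.\<close>

type_synonym zsqrt = "int \<times> int"

definition zs_add :: "zsqrt \<Rightarrow> zsqrt \<Rightarrow> zsqrt" where
  "zs_add x y = (fst x + fst y, snd x + snd y)"

definition zs_mul :: "int \<Rightarrow> zsqrt \<Rightarrow> zsqrt \<Rightarrow> zsqrt" where
  "zs_mul d x y = (fst x * fst y + d * snd x * snd y, fst x * snd y + snd x * fst y)"

definition zs_is_square :: "int \<Rightarrow> zsqrt \<Rightarrow> bool" where
  "zs_is_square d z \<longleftrightarrow> (\<exists>w. zs_mul d w w = z)"

definition is_Dn_quadruple :: "int \<Rightarrow> zsqrt \<Rightarrow> zsqrt set \<Rightarrow> bool" where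
  "is_Dn_quadruple d n S \<longleftrightarrow>
     card S = 4 \<and> (0, 0) \<notin> S \<and>
     (\<forall>x\<in>S. \<forall>y\<in>S. x \<noteq> y \<longrightarrow> zs_is_square d (zs_add (zs_mul d x y) n))"

end

theory Submission
  imports Defs Complex_Main
begin

text \<open>If \<open>ab + n = r\<^sup>2\<close>, then in \<open>{a, b, c, d}\<close> with \<open>c = a + b + 2r\<close> and
\<open>d = a + 4b + 4r\<close> every product plus \<open>n\<close> is a square by a polynomial identity, except
\<open>ad + n = (a + 2r)\<^sup>2 - 3n\<close>; so a \<open>D(n)\<close>-pair for which this last number is also a square
extends to a \<open>D(n)\<close>-quadruple. Replacing \<open>a\<close> by \<open>a\<epsilon>\<close> and \<open>d\<close> by \<open>d\<epsilon>'\<close>, for a unit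
\<open>\<epsilon> \<equiv> 1 (mod 4)\<close> of norm one with conjugate \<open>\<epsilon>'\<close>, keeps \<open>ad\<close> and \<open>a + 2r\<close> fixed and
the new \<open>b, r\<close> integral, so it produces another such pair. The powers of
\<open>721 + 228\<surd>10\<close> give infinitely many, and they are genuine quadruples as soon as \<open>|a\<epsilon>|\<close>
dominates \<open>|d\<epsilon>'|\<close> and \<open>|a + 2r|\<close>. For the \<open>n\<close> of the theorem, suitable \<open>a, b, r\<close> are
explicit polynomials in \<open>m\<close> and \<open>k\<close>.\<close>

definition zs_real :: "zsqrt \<Rightarrow> real" where
  "zs_real x = of_int (fst x) + of_int (snd x) * sqrt 10"

definition Zsqrt10 :: "real set" where
  "Zsqrt10 = range zs_real"

lemma zs_real_add: "zs_real (zs_add x y) = zs_real x + zs_real y"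
  by (simp add: zs_real_def zs_add_def algebra_simps)

lemma zs_real_mul: "zs_real (zs_mul 10 x y) = zs_real x * zs_real y"
proof -
  have "zs_real x * zs_real y = of_int (fst x * fst y) + of_int (snd x * snd y) * (sqrt 10 * sqrt 10)
      + of_int (fst x * snd y + snd x * fst y) * sqrt 10"
    by (simp add: zs_real_def algebra_simps)
  then show ?thesis
    by (simp add: zs_real_def zs_mul_def algebra_simps)
qed

lemma int_square_eq_10_times_square:
  fixes a b :: int
  assumes "a^2 = 10 * b^2"
  shows "b = 0"
  using assms
proof (induction "nat \<bar>b\<bar>" arbitrary: a b rule: less_induct)
  case less
  show ?case
  proof (rule ccontr)
    assume "b \<noteq> 0"
    from less.prems have "even a" by (metis dvd_triv_left even_mult_iff even_numeral power2_eq_square)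
    then obtain c where c: "a = 2 * c" ..
    with less.prems have five: "2 * c^2 = 5 * b^2" by (simp add: power_mult_distrib)
    then have "even b" by (metis dvd_triv_left even_mult_iff odd_numeral power2_eq_square)
    then obtain e where e: "b = 2 * e" ..
    with five have "c^2 = 10 * e^2" by (simp add: power_mult_distrib)
    moreover have "nat \<bar>e\<bar> < nat \<bar>b\<bar>" using e \<open>b \<noteq> 0\<close> by auto
    ultimately have "e = 0" using less.hyps by blast
    with e \<open>b \<noteq> 0\<close> show False by simp
  qed
qed

lemma inj_zs_real: "inj zs_real"
proof (rule injI)
  fix x y assume "zs_real x = zs_real y"
  then have eq: "of_int (fst x - fst y) = of_int (snd y - snd x) * sqrt (10::real)"
    by (simp add: zs_real_def algebra_simps)
  then have "real_of_int ((fst x - fst y)^2) = real_of_int (10 * (snd y - snd x)^2)"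
    by (simp add: power_mult_distrib)
  then have "snd y - snd x = 0"
    by (intro int_square_eq_10_times_square) (simp only: of_int_eq_iff)
  with eq show "x = y" by (simp add: prod_eq_iff)
qed

lemma zs_real_eq_0_iff: "zs_real x = 0 \<longleftrightarrow> x = (0, 0)"
  using inj_zs_real by (metis injD zs_real_def fst_conv snd_conv of_int_0 mult_zero_left add_0)

lemma Zsqrt10_of_int [simp]: "of_int z \<in> Zsqrt10"
  unfolding Zsqrt10_def by (rule range_eqI[of _ _ "(z, 0)"]) (simp add: zs_real_def)

lemma Zsqrt10_0 [simp]: "0 \<in> Zsqrt10" and Zsqrt10_1 [simp]: "1 \<in> Zsqrt10"
  using Zsqrt10_of_int[of 0] Zsqrt10_of_int[of 1] by simp_all

lemma Zsqrt10_numeral [simp]: "numeral w \<in> Zsqrt10"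
  using Zsqrt10_of_int[of "numeral w"] by simp

lemma Zsqrt10_add [intro]: "x \<in> Zsqrt10 \<Longrightarrow> y \<in> Zsqrt10 \<Longrightarrow> x + y \<in> Zsqrt10"
  unfolding Zsqrt10_def by (auto simp: zs_real_add[symmetric])

lemma Zsqrt10_mult [intro]: "x \<in> Zsqrt10 \<Longrightarrow> y \<in> Zsqrt10 \<Longrightarrow> x * y \<in> Zsqrt10"
  unfolding Zsqrt10_def by (auto simp: zs_real_mul[symmetric])

lemma Zsqrt10_uminus [intro]: "x \<in> Zsqrt10 \<Longrightarrow> - x \<in> Zsqrt10"
  using Zsqrt10_mult[OF Zsqrt10_of_int[of "-1"]] by simp

lemma Zsqrt10_diff [intro]: "x \<in> Zsqrt10 \<Longrightarrow> y \<in> Zsqrt10 \<Longrightarrow> x - y \<in> Zsqrt10"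
  using Zsqrt10_add[of x "- y"] Zsqrt10_uminus by simp

lemma is_Dn_quadruple_vimage_zs_real:
  fixes Q :: "real set"
  assumes "Q \<subseteq> Zsqrt10" and "card Q = 4" and "0 \<notin> Q"
    and squares: "\<And>p q. p \<in> Q \<Longrightarrow> q \<in> Q \<Longrightarrow> p \<noteq> q \<Longrightarrow> \<exists>w\<in>Zsqrt10. p * q + zs_real n = w^2"
  shows "is_Dn_quadruple 10 n (zs_real -` Q)"
  unfolding is_Dn_quadruple_def
proof (intro conjI ballI impI)
  show "card (zs_real -` Q) = 4"
    using assms(1,2) inj_zs_real by (simp add: card_vimage_inj Zsqrt10_def)
  show "(0, 0) \<notin> zs_real -` Q"
    using assms(3) by (simp add: zs_real_def)
next
  fix x y assume "x \<in> zs_real -` Q" "y \<in> zs_real -` Q" "x \<noteq> y"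
  then obtain w where "w \<in> Zsqrt10" and w: "zs_real x * zs_real y + zs_real n = w^2"
    using squares inj_zs_real by (metis injD vimageE)
  then obtain v where "w = zs_real v" by (auto simp: Zsqrt10_def)
  with w have "zs_real (zs_mul 10 v v) = zs_real (zs_add (zs_mul 10 x y) n)"
    by (simp add: zs_real_mul zs_real_add power2_eq_square)
  then show "zs_is_square 10 (zs_add (zs_mul 10 x y) n)"
    unfolding zs_is_square_def using inj_zs_real by (blast dest: injD)
qed

lemma Dn_pair_extension_squares:
  fixes a b r n :: "'a::comm_ring_1"
  assumes "a * b + n = r^2"
  shows "a * (a + b + 2*r) + n = (a + r)^2"
    and "b * (a + b + 2*r) + n = (b + r)^2"
    and "b * (a + 4*b + 4*r) + n = (2*b + r)^2"
    and "(a + b + 2*r) * (a + 4*b + 4*r) + n = (a + 2*b + 3*r)^2"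
  using assms by (simp_all add: power2_eq_square algebra_simps flip: assms)

lemma Dn_pair_twist:
  fixes a b r n e e' :: "'a::comm_ring_1"
  assumes "a * b + n = r^2" and unit: "e + e' + 4*e*e' = 0"
  defines "d \<equiv> a + 4*b + 4*r"
  shows "(a * (1 + 4*e)) * (b + a*e + d*e') + n = (r - 2*a*e)^2"
    and "a * (1 + 4*e) + 4 * (b + a*e + d*e') + 4 * (r - 2*a*e) = d * (1 + 4*e')"
    and "a * (1 + 4*e) + 2 * (r - 2*a*e) = a + 2*r"
    and "(a * (1 + 4*e)) * (d * (1 + 4*e')) = a * d"
proof -
  have "(a * (1 + 4*e)) * (b + a*e + d*e') + n - (r - 2*a*e)^2
      = (a * b + n - r^2) + a * d * (e + e' + 4*e*e')"
    by (simp add: d_def power2_eq_square algebra_simps)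
  then show "(a * (1 + 4*e)) * (b + a*e + d*e') + n = (r - 2*a*e)^2"
    using assms(1) unit by simp
  show "a * (1 + 4*e) + 4 * (b + a*e + d*e') + 4 * (r - 2*a*e) = d * (1 + 4*e')"
    by (simp add: d_def algebra_simps)
  show "a * (1 + 4*e) + 2 * (r - 2*a*e) = a + 2*r"
    by (simp add: algebra_simps)
  have "(a * (1 + 4*e)) * (d * (1 + 4*e')) = a * d + 4 * a * d * (e + e' + 4*e*e')"
    by (simp add: algebra_simps)
  then show "(a * (1 + 4*e)) * (d * (1 + 4*e')) = a * d"
    using unit by simp
qed

lemma extension_card_eq_4_nonzero:
  fixes a b r :: real
  defines "d \<equiv> a + 4*b + 4*r" and "x \<equiv> a + 2*r"
  assumes big: "\<bar>a\<bar> > 3 * \<bar>d\<bar> + 2 * \<bar>x\<bar>" and "d \<noteq> 0" and "x \<noteq> 0"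
  shows "card {a, b, a + b + 2*r, d} = 4" and "0 \<notin> {a, b, a + b + 2*r, d}"
proof -
  have b: "4 * b = a + d - 2 * x" and c: "4 * (a + b + 2*r) = a + d + 2 * x"
    by (simp_all add: d_def x_def algebra_simps)
  have "distinct [a, b, a + b + 2*r, d]" and "0 \<notin> {a, b, a + b + 2*r, d}"
    using big b c \<open>d \<noteq> 0\<close> \<open>x \<noteq> 0\<close> by (auto simp: abs_if split: if_splits)
  then show "card {a, b, a + b + 2*r, d} = 4" and "0 \<notin> {a, b, a + b + 2*r, d}"
    by (simp_all add: card_insert_if)
qed

lemma is_Dn_quadruple_extension:
  fixes a b r y :: real
  defines "d \<equiv> a + 4*b + 4*r" and "x \<equiv> a + 2*r"
  assumes "a \<in> Zsqrt10" "b \<in> Zsqrt10" "r \<in> Zsqrt10" "y \<in> Zsqrt10"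
    and pair: "a * b + zs_real n = r^2" and fourth: "a * d + zs_real n = y^2"
    and "\<bar>a\<bar> > 3 * \<bar>d\<bar> + 2 * \<bar>x\<bar>" and "d \<noteq> 0" and "x \<noteq> 0"
  shows "is_Dn_quadruple 10 n (zs_real -` {a, b, a + b + 2*r, d})"
proof (rule is_Dn_quadruple_vimage_zs_real)
  show "{a, b, a + b + 2*r, d} \<subseteq> Zsqrt10"
    using assms(3-5) by (auto simp: d_def intro!: Zsqrt10_add Zsqrt10_mult)
  show "card {a, b, a + b + 2*r, d} = 4" and "0 \<notin> {a, b, a + b + 2*r, d}"
    using extension_card_eq_4_nonzero assms(9-11) unfolding d_def x_def by blast+
  have Z: "a + r \<in> Zsqrt10" "b + r \<in> Zsqrt10" "2*b + r \<in> Zsqrt10" "a + 2*b + 3*r \<in> Zsqrt10"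
    using assms(3-5) by (auto intro!: Zsqrt10_add Zsqrt10_mult)
  have square: "\<exists>w\<in>Zsqrt10. p * q + zs_real n = w^2" if "p * q + zs_real n = w^2" "w \<in> Zsqrt10" for p q w
    using that by blast
  note ext = Dn_pair_extension_squares[OF pair, folded d_def]
  note squares = square[OF pair assms(5)] square[OF fourth assms(6)]
    square[OF ext(1) Z(1)] square[OF ext(2) Z(2)] square[OF ext(3) Z(3)] square[OF ext(4) Z(4)]
  fix p q assume "p \<in> {a, b, a + b + 2*r, d}" "q \<in> {a, b, a + b + 2*r, d}" "p \<noteq> q"
  then show "\<exists>w\<in>Zsqrt10. p * q + zs_real n = w^2"
    using squares by (auto simp: mult.commute)
qed

lemma Zsqrt10_power_quarter:
  assumes "(u - 1) / 4 \<in> Zsqrt10"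
  shows "(u ^ i - 1) / 4 \<in> Zsqrt10"
proof (induction i)
  case 0
  show ?case by simp
next
  case (Suc i)
  have "4 * ((u - 1) / 4) + 1 \<in> Zsqrt10"
    using assms by (intro Zsqrt10_add Zsqrt10_mult) simp_all
  then have "u \<in> Zsqrt10" by (simp add: field_simps)
  have "(u ^ Suc i - 1) / 4 = u * ((u ^ i - 1) / 4) + (u - 1) / 4"
    by (simp add: field_simps)
  with \<open>u \<in> Zsqrt10\<close> Suc.IH assms show ?case
    by (metis Zsqrt10_add Zsqrt10_mult)
qed

lemma infinite_image_if_selection:
  assumes "infinite (g ` I)" and "\<And>i. i \<in> I \<Longrightarrow> g i \<in> h ` F i \<and> finite (F i)"
  shows "infinite (F ` I)"
proof
  assume "finite (F ` I)"
  with assms(2) have "finite (h ` \<Union> (F ` I))" by auto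
  moreover have "g ` I \<subseteq> h ` \<Union> (F ` I)" using assms(2) by blast
  ultimately show False using assms(1) finite_subset by blast
qed

text \<open>\<open>rho = (3 + \<surd>10)\<^sup>4\<close> is the least power of the fundamental unit that is
\<open>\<equiv> 1 (mod 4)\<close>; \<open>rho'\<close> is its conjugate.\<close>

definition rho :: real where
  "rho = 721 + 228 * sqrt 10"

definition rho' :: real where
  "rho' = 721 - 228 * sqrt 10"

lemma rho_mult_rho': "rho * rho' = 1"
  by (simp add: rho_def rho'_def algebra_simps)

lemma one_less_rho: "1 < rho"
  unfolding rho_def using real_sqrt_ge_zero[of 10] by linarith

lemma rho'_bounds: "0 < rho'" "rho' \<le> 1"
proof -
  have inverse: "rho' = 1 / rho"
    using rho_mult_rho' one_less_rho by (simp add: field_simps)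
  show "0 < rho'" "rho' \<le> 1"
    unfolding inverse using one_less_rho by simp_all
qed

lemma rho_quarters: "(rho - 1) / 4 \<in> Zsqrt10" "(rho' - 1) / 4 \<in> Zsqrt10"
proof -
  have "(rho - 1) / 4 = zs_real (180, 57)" "(rho' - 1) / 4 = zs_real (180, -57)"
    by (simp_all add: rho_def rho'_def zs_real_def)
  then show "(rho - 1) / 4 \<in> Zsqrt10" "(rho' - 1) / 4 \<in> Zsqrt10"
    by (simp_all add: Zsqrt10_def)
qed

lemma ex_Dn_quadruple_containing_power:
  fixes a b r y :: real and i :: nat
  defines "d \<equiv> a + 4*b + 4*r" and "x \<equiv> a + 2*r"
  assumes Z: "a \<in> Zsqrt10" "b \<in> Zsqrt10" "r \<in> Zsqrt10" "y \<in> Zsqrt10"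
    and pair: "a * b + zs_real n = r^2" and fourth: "a * d + zs_real n = y^2"
    and "d \<noteq> 0" and "x \<noteq> 0" and big: "3 * \<bar>d\<bar> + 2 * \<bar>x\<bar> < \<bar>a\<bar> * rho ^ i"
  shows "\<exists>S. is_Dn_quadruple 10 n S \<and> a * rho ^ i \<in> zs_real ` S"
proof -
  define e e' where "e = (rho ^ i - 1) / 4" and "e' = (rho' ^ i - 1) / 4"
  have unit: "e + e' + 4*e*e' = 0"
    by (simp add: e_def e'_def field_simps flip: power_mult_distrib) (simp add: rho_mult_rho')
  have rho: "rho ^ i = 1 + 4*e" "rho' ^ i = 1 + 4*e'"
    by (simp_all add: e_def e'_def field_simps)
  note twist = Dn_pair_twist[OF pair unit, folded d_def x_def, unfolded rho[symmetric]]
  have "e \<in> Zsqrt10" "e' \<in> Zsqrt10"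
    unfolding e_def e'_def using Zsqrt10_power_quarter rho_quarters by blast+
  with Z have Z': "a * rho ^ i \<in> Zsqrt10" "b + a*e + d*e' \<in> Zsqrt10" "r - 2*a*e \<in> Zsqrt10"
    by (auto simp: rho d_def intro!: Zsqrt10_add Zsqrt10_diff Zsqrt10_mult)
  let ?Q = "{a * rho ^ i, b + a*e + d*e', a * rho ^ i + (b + a*e + d*e') + 2 * (r - 2*a*e),
             a * rho ^ i + 4 * (b + a*e + d*e') + 4 * (r - 2*a*e)}"
  have "is_Dn_quadruple 10 n (zs_real -` ?Q)"
  proof (rule is_Dn_quadruple_extension[OF Z' Z(4) twist(1)], unfold twist(2,3))
    show "a * rho ^ i * (d * rho' ^ i) + zs_real n = y^2"
      unfolding twist(4) by (fact fourth)
    have "\<bar>d * rho' ^ i\<bar> \<le> \<bar>d\<bar>"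
      using rho'_bounds by (simp add: abs_mult mult_left_le power_le_one)
    with big show "3 * \<bar>d * rho' ^ i\<bar> + 2 * \<bar>x\<bar> < \<bar>a * rho ^ i\<bar>"
      using one_less_rho by (simp add: abs_mult)
    show "d * rho' ^ i \<noteq> 0"
      using \<open>d \<noteq> 0\<close> rho'_bounds by simp
  qed fact
  moreover have "a * rho ^ i \<in> zs_real ` (zs_real -` ?Q)"
    using Z'(1) by (auto simp: Zsqrt10_def)
  ultimately show ?thesis by blast
qed

theorem infinite_Dn_quadruples_of_extendable_pair:
  fixes a b r y :: real
  defines "d \<equiv> a + 4*b + 4*r" and "x \<equiv> a + 2*r"
  assumes Z: "a \<in> Zsqrt10" "b \<in> Zsqrt10" "r \<in> Zsqrt10" "y \<in> Zsqrt10"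
    and pair: "a * b + zs_real n = r^2" and fourth: "a * d + zs_real n = y^2"
    and "a \<noteq> 0" and "d \<noteq> 0" and "x \<noteq> 0"
  shows "infinite {S. is_Dn_quadruple 10 n S}"
proof -
  obtain N where N: "(3 * \<bar>d\<bar> + 2 * \<bar>x\<bar>) / \<bar>a\<bar> < rho ^ N"
    using real_arch_pow[OF one_less_rho] by blast
  have "\<exists>S. is_Dn_quadruple 10 n S \<and> a * rho ^ i \<in> zs_real ` S" if "N \<le> i" for i
  proof (rule ex_Dn_quadruple_containing_power[OF Z pair fourth[unfolded d_def]])
    have "\<bar>a\<bar> * rho ^ N \<le> \<bar>a\<bar> * rho ^ i"
      using one_less_rho that by (simp add: power_increasing mult_left_mono)
    moreover have "3 * \<bar>d\<bar> + 2 * \<bar>x\<bar> < \<bar>a\<bar> * rho ^ N"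
      using N \<open>a \<noteq> 0\<close> by (simp add: pos_divide_less_eq mult.commute)
    ultimately show "3 * \<bar>a + 4*b + 4*r\<bar> + 2 * \<bar>a + 2*r\<bar> < \<bar>a\<bar> * rho ^ i"
      by (simp add: d_def x_def)
  qed (use \<open>d \<noteq> 0\<close> \<open>x \<noteq> 0\<close> in \<open>simp_all add: d_def x_def\<close>)
  then obtain S where S: "\<And>i. N \<le> i \<Longrightarrow> is_Dn_quadruple 10 n (S i) \<and> a * rho ^ i \<in> zs_real ` S i"
    by metis
  have "inj (\<lambda>i. a * rho ^ i)"
    using \<open>a \<noteq> 0\<close> one_less_rho by (simp add: inj_def power_inject_exp)
  then have "infinite ((\<lambda>i. a * rho ^ i) ` {N..})"
    by (metis finite_imageD infinite_Ici inj_on_subset subset_UNIV)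
  then have "infinite (S ` {N..})"
    by (rule infinite_image_if_selection) (use S in \<open>auto simp: is_Dn_quadruple_def card_ge_0_finite\<close>)
  moreover have "S ` {N..} \<subseteq> {S. is_Dn_quadruple 10 n S}"
    using S by auto
  ultimately show ?thesis
    using finite_subset by blast
qed

corollary infinite_Dn_quadruples_of_odd_extendable_pair:
  fixes n a b r y :: zsqrt
  assumes pair: "zs_add (zs_mul 10 a b) n = zs_mul 10 r r"
    and fourth: "zs_add (zs_mul 10 a (fst a + 4 * (fst b + fst r), snd a + 4 * (snd b + snd r))) n
                   = zs_mul 10 y y"
    and "odd (snd a)"
  shows "infinite {S. is_Dn_quadruple 10 n S}"
proof (rule infinite_Dn_quadruples_of_extendable_pair)
  show "zs_real a \<in> Zsqrt10" "zs_real b \<in> Zsqrt10" "zs_real r \<in> Zsqrt10" "zs_real y \<in> Zsqrt10"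
    by (simp_all add: Zsqrt10_def)
  have real_eq: "zs_real (zs_add (zs_mul 10 u v) n) = zs_real (zs_mul 10 w w) \<Longrightarrow>
      zs_real u * zs_real v + zs_real n = zs_real w ^ 2" for u v w
    by (simp add: zs_real_add zs_real_mul power2_eq_square)
  have d: "zs_real a + 4 * zs_real b + 4 * zs_real r
      = zs_real (fst a + 4 * (fst b + fst r), snd a + 4 * (snd b + snd r))"
    and x: "zs_real a + 2 * zs_real r = zs_real (fst a + 2 * fst r, snd a + 2 * snd r)"
    by (simp_all add: zs_real_def algebra_simps)
  show "zs_real a * zs_real b + zs_real n = zs_real r ^ 2"
    using pair by (intro real_eq) simp
  show "zs_real a * (zs_real a + 4 * zs_real b + 4 * zs_real r) + zs_real n = zs_real y ^ 2"
    unfolding d using fourth by (intro real_eq) simp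
  \<comment> \<open>\<open>a + 4b + 4r\<close> and \<open>a + 2r\<close> are congruent to \<open>a\<close> modulo 2\<close>
  show "zs_real a \<noteq> 0" "zs_real a + 4 * zs_real b + 4 * zs_real r \<noteq> 0" "zs_real a + 2 * zs_real r \<noteq> 0"
    unfolding d x zs_real_eq_0_iff using \<open>odd (snd a)\<close> by auto presburger+
qed

text \<open>With the \<open>a\<close>, \<open>r\<close>, \<open>y\<close> used below, the partner \<open>b = (r\<^sup>2 - n) / a\<close> lies in
\<open>\<int>[\<surd>10]\<close> exactly for the residues of \<open>m\<close> modulo 5 in the hypotheses; it is written in
terms of \<open>t = m div 5\<close>.\<close>

lemma infinite_Dn_quadruples_first_family:
  fixes m k :: int
  assumes "m mod 5 \<in> {1, 2}"
  shows "infinite {S. is_Dn_quadruple 10 (4 * (12 * m + 9) + 2, 4 * (6 * k + 3)) S}"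
proof -
  define t where "t = m div 5"
  from assms consider "m = 5 * t + 1" | "m = 5 * t + 2"
    unfolding t_def by (metis div_mult_mod_eq add.commute insertE mult.commute singletonD)
  then show ?thesis
  proof cases
    case 1
    show ?thesis
      by (rule infinite_Dn_quadruples_of_odd_extendable_pair[where a = "(-10, -3)"
            and b = "(-1800*t^2 - 360*t*k - 1440*t - 180*k^2 - 384*k - 374,
                      -180*t^2 - 360*t*k - 384*t - 18*k^2 - 144*k - 117)"
            and r = "(24*m + 30*k + 40, 6*m + 12*k + 12)"
            and y = "(48*m + 60*k + 66, 12*m + 24*k + 22)"])
        (simp_all add: 1 zs_add_def zs_mul_def power2_eq_square algebra_simps)
  next
    case 2
    show ?thesis
      by (rule infinite_Dn_quadruples_of_odd_extendable_pair[where a = "(-10, -3)"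
            and b = "(-1800*t^2 - 360*t*k - 2160*t - 180*k^2 - 456*k - 734,
                      -180*t^2 - 360*t*k - 456*t - 18*k^2 - 216*k - 201)"
            and r = "(24*m + 30*k + 40, 6*m + 12*k + 12)"
            and y = "(48*m + 60*k + 66, 12*m + 24*k + 22)"])
        (simp_all add: 2 zs_add_def zs_mul_def power2_eq_square algebra_simps)
  qed
qed

lemma infinite_Dn_quadruples_second_family:
  fixes m k :: int
  assumes "m mod 5 \<in> {3, 4}"
  shows "infinite {S. is_Dn_quadruple 10 (48 * m + 2, 24 * k) S}"
proof -
  define t where "t = m div 5"
  from assms consider "m = 5 * t + 3" | "m = 5 * t + 4"
    unfolding t_def by (metis div_mult_mod_eq add.commute insertE mult.commute singletonD)
  then show ?thesis
  proof cases
    case 1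
    show ?thesis
      by (rule infinite_Dn_quadruples_of_odd_extendable_pair[where a = "(0, -1)"
            and b = "(3600*t^2 - 2520*t*k + 4440*t + 360*k^2 - 1548*k + 1368,
                      -1260*t^2 + 720*t*k - 1548*t - 126*k^2 + 444*k - 476)"
            and r = "(-12*m + 30*k, 6*m - 6*k + 1)"
            and y = "(-24*m + 60*k - 2, 12*m - 12*k)"])
        (simp_all add: 1 zs_add_def zs_mul_def power2_eq_square algebra_simps)
  next
    case 2
    show ?thesis
      by (rule infinite_Dn_quadruples_of_odd_extendable_pair[where a = "(0, -1)"
            and b = "(3600*t^2 - 2520*t*k + 5880*t + 360*k^2 - 2052*k + 2400,
                      -1260*t^2 + 720*t*k - 2052*t - 126*k^2 + 588*k - 836)"
            and r = "(-12*m + 30*k, 6*m - 6*k + 1)"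
            and y = "(-24*m + 60*k - 2, 12*m - 12*k)"])
        (simp_all add: 2 zs_add_def zs_mul_def power2_eq_square algebra_simps)
  qed
qed

theorem mainTheorem7:
  fixes m k :: int
  shows "(m mod 5 \<in> {1, 2} \<longrightarrow>
            infinite {S. is_Dn_quadruple 10 (4 * (12 * m + 9) + 2, 4 * (6 * k + 3)) S})
       \<and> (m mod 5 \<in> {3, 4} \<longrightarrow>
            infinite {S. is_Dn_quadruple 10 (48 * m + 2, 24 * k) S})"
  using infinite_Dn_quadruples_first_family infinite_Dn_quadruples_second_family by blast

end
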